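(* Let $\mathbf x_1,\dots,\mathbf x_n\in\mathbb R^d$ be distinct points, let $f\colon(0,\infty)\to\mathbb R$ be differentiable, and let $J\colon\mathbb R^n\to\mathbb R$ be a symmetric function that is differentiable at $\lambda(W^{\mathbf x})$. Then the gradient of $\mathbf x\mapsto J(\lambda(W^{\mathbf x}))$ with respect to $\mathbf x_i$ is $$\nabla_{\mathbf x_i}\big(J\circ\lambda\circ W^{\mathbf x}\big)=4\sum_{k\ne i}\big(U\,\mathrm{diag}(\nabla J(\lambda))\,U^t\big)_{ik}\, f'\big(|\mathbf x_i-\mathbf x_k|^2\big)\,(\mathbf x_i-\mathbf x_k)$$ for any orthogonal matrix $U\in O(n)$ satisfying $W^{\mathbf x}=U\,\mathrm{diag}(\lambda(W^{\mathbf x}))\,U^t$, where $\nabla J(\lambda)$ is evaluated at $\lambda=\lambda(W^{\mathbf x})$.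
   Context: $W^{\mathbf x}$ is the $n\times n$ symmetric matrix with $W^{\mathbf x}_{ij}=f(|\mathbf x_i-\mathbf x_j|^2)$ for $i\ne j$ (Euclidean distance) and $W^{\mathbf x}_{ii}=0$. For a real symmetric matrix $A$, $\lambda(A)\in\mathbb R^n$ denotes the vector of its eigenvalues in non-decreasing order. A function $J\colon\mathbb R^n\to\mathbb R$ is symmetric if $J(x)$ is invariant under permutations of the components of $x$. *)

theory Defs
  imports "HOL-Analysis.Analysis" "HOL-Computational_Algebra.Polynomial"
begin

definition diag_mat :: "real ^ 'n \<Rightarrow> real ^ 'n ^ 'n" where
  "diag_mat v = (\<chi> i j. if i = j then v $ j else 0)"

definition charpoly :: "real ^ 'n ^ 'n \<Rightarrow> real poly" where
  "charpoly A = det (\<chi> i j. (if i = j then [:0, 1:] else 0) - [:A $ i $ j:])"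

definition eigvals :: "real ^ ('n :: {finite, linorder}) ^ ('n :: {finite, linorder}) \<Rightarrow> real ^ ('n :: {finite, linorder})" where
  "eigvals A = (THE l. (\<forall>i j. i \<le> j \<longrightarrow> l $ i \<le> l $ j) \<and>
      (\<forall>c. card {j. l $ j = c} = order c (charpoly A)))"

text \<open>W^x: rows of x are the points x_1..x_n in R^d.\<close>
definition Wmat :: "(real \<Rightarrow> real) \<Rightarrow> real ^ 'd ^ 'n \<Rightarrow> real ^ 'n ^ 'n" where
  "Wmat f x = (\<chi> i j. if i = j then 0 else f ((norm (x $ i - x $ j))\<^sup>2))"

definition symmetric_fun :: "(real ^ 'n \<Rightarrow> real) \<Rightarrow> bool" where
  "symmetric_fun J \<longleftrightarrow> (\<forall>p l. p permutes UNIV \<longrightarrow> J (\<chi> j. l $ p j) = J l)"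

end

theory Submission
  imports Defs
begin

(*
  Let l0 = eigvals (Wmat f x) and Wmat f x = U diag(l0) U^T. For a symmetric matrix A near
  Wmat f x, the matrix U^T A U is within phi = O(|A - Wmat f x|) of diag(l0) in the l1 sense.
  Diagonalising it as Q diag(nu) Q^T, every eigenvalue nu_k lies within O(phi) of some l0_j, and
  column k of Q has mass O(phi^2) outside the cluster of indices j carrying that value of l0;
  counting these masses matches the eigenvalues with l0 by a permutation p. As J is symmetric,
  its gradient is constant on clusters, so sum_j gJ_j nu_(p j) agrees with
  sum_j gJ_j (U^T A U)_jj = <U diag(gJ) U^T, A> up to O(phi^2). Hence A |-> J (eigvals A) is
  differentiable on symmetric matrices with gradient U diag(gJ) U^T, and the formula follows by
  the chain rule, because moving x_i changes only row and column i of Wmat f x.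
*)

section \<open>Orthogonal matrices and orthogonal diagonalization\<close>

lemma orthogonal_matrix_column_sum_squares:
  assumes "orthogonal_matrix (Q::real^'n^'n)"
  shows "(\<Sum>j\<in>UNIV. (Q$j$k)\<^sup>2) = 1"
proof -
  have "(transpose Q ** Q) $ k $ k = 1" using assms unfolding orthogonal_matrix_def by (simp add: mat_def)
  then show ?thesis by (simp add: matrix_matrix_mult_def transpose_def power2_eq_square)
qed

lemma orthogonal_matrix_row_sum_squares:
  assumes "orthogonal_matrix (Q::real^'n^'n)"
  shows "(\<Sum>k\<in>UNIV. (Q$j$k)\<^sup>2) = 1"
proof -
  have "(Q ** transpose Q) $ j $ j = 1" using assms unfolding orthogonal_matrix_def by (simp add: mat_def)
  then show ?thesis by (simp add: matrix_matrix_mult_def transpose_def power2_eq_square)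
qed

lemma orthogonal_matrix_entry_abs_le_1:
  assumes "orthogonal_matrix (Q::real^'n^'n)"
  shows "\<bar>Q$j$k\<bar> \<le> 1"
proof -
  have "(Q$j$k)\<^sup>2 \<le> (\<Sum>j\<in>UNIV. (Q$j$k)\<^sup>2)" by (rule member_le_sum) auto
  then show ?thesis using orthogonal_matrix_column_sum_squares[OF assms] by (simp add: abs_square_le_1)
qed

lemma orthogonal_matrix_large_entry:
  assumes "orthogonal_matrix (Q::real^'n^'n)"
  obtains j where "1 / real CARD('n) \<le> \<bar>Q$j$k\<bar>"
proof (rule ccontr)
  assume "\<not> thesis"
  with that have small: "\<bar>Q$j$k\<bar> < 1 / real CARD('n)" for j by (meson not_le)
  have "(Q$j$k)\<^sup>2 \<le> \<bar>Q$j$k\<bar>" for j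
    using orthogonal_matrix_entry_abs_le_1[OF assms, of j k]
    by (metis abs_ge_zero abs_mult_self_eq mult_left_le_one_le power2_eq_square)
  then have "(\<Sum>j\<in>UNIV. (Q$j$k)\<^sup>2) < (\<Sum>j\<in>(UNIV::'n set). 1 / real CARD('n))"
    using small by (intro sum_strict_mono) (auto intro: le_less_trans)
  then show False using orthogonal_matrix_column_sum_squares[OF assms, of k] by simp
qed

lemma conj_diag_mat_entry:
  fixes Q :: "real^'n^'n"
  shows "(Q ** diag_mat \<nu> ** transpose Q) $ a $ b = (\<Sum>j\<in>UNIV. Q$a$j * \<nu>$j * Q$b$j)"
  unfolding matrix_matrix_mult_def diag_mat_def transpose_def
  by (simp add: if_distrib[of "\<lambda>x. _ * x"] sum.delta' cong: if_cong)

lemma orthogonal_diagonalization_column: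
  assumes "orthogonal_matrix (Q::real^'n^'n)"
  shows "(\<Sum>l\<in>UNIV. (Q ** diag_mat \<nu> ** transpose Q)$j$l * Q$l$k) = Q$j$k * \<nu>$k"
proof -
  have "(Q ** diag_mat \<nu> ** transpose Q) ** Q = Q ** diag_mat \<nu> ** (transpose Q ** Q)"
    by (simp add: matrix_mul_assoc)
  also have "\<dots> = Q ** diag_mat \<nu>" using assms unfolding orthogonal_matrix_def by simp
  finally show ?thesis
    by (auto simp: vec_eq_iff matrix_matrix_mult_def diag_mat_def if_distrib[of "\<lambda>x. _ * x"]
        sum.delta' cong: if_cong)
qed

lemma symmetric_matrix_inner_commute:
  fixes A :: "real^'n^'n"
  assumes "transpose A = A"
  shows "(A *v x) \<bullet> y = x \<bullet> (A *v y)"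
  by (metis assms dot_lmul_matrix vector_transpose_matrix)

lemma quadratic_minorant_linear_coeff_zero:
  fixes a K :: real
  assumes "\<And>t. 2 * t * a \<le> t\<^sup>2 * K"
  shows "a = 0"
proof -
  define r where "r = \<bar>K\<bar> + 1"
  have r: "r > 0" unfolding r_def by simp
  have "2 * (a / r) * a * r\<^sup>2 \<le> (a / r)\<^sup>2 * K * r\<^sup>2"
    using assms[of "a / r"] r by (intro mult_right_mono) auto
  then have "2 * a * a * r \<le> a * a * K"
    using r by (simp add: power2_eq_square field_simps)
  moreover have "a * a * K \<le> a * a * \<bar>K\<bar>" by (intro mult_left_mono) auto
  ultimately have "a * a * (\<bar>K\<bar> + 2) \<le> 0" unfolding r_def by (simp add: algebra_simps)
  then show ?thesis by (auto simp: mult_le_0_iff)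
qed

context
  fixes A :: "real^'n^'n" and S :: "(real^'n) set" and v :: "real^'n"
  assumes sym: "transpose A = A" and S: "subspace S" and v: "v \<in> S" "norm v = 1"
    and max: "\<forall>y\<in>S \<inter> sphere 0 1. y \<bullet> (A *v y) \<le> v \<bullet> (A *v v)"
begin

lemma rayleigh_maximizer_orthogonal:
  assumes w: "w \<in> S" "w \<bullet> v = 0"
  shows "w \<bullet> (A *v v) = 0"
proof -
  define q where "q y = y \<bullet> (A *v y)" for y
  have q_le: "q u \<le> q v * (norm u)\<^sup>2" if "u \<in> S" for u
  proof (cases "u = 0")
    case False
    have "(1 / norm u) *\<^sub>R u \<in> S \<inter> sphere 0 1" using that False S by (simp add: subspace_scale)
    then have "q ((1 / norm u) *\<^sub>R u) \<le> q v" using max unfolding q_def by blast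
    then have "q u / (norm u)\<^sup>2 \<le> q v"
      by (simp add: q_def matrix_vector_mult_scaleR power2_eq_square)
    then show ?thesis using False by (simp add: divide_le_eq)
  qed (simp add: q_def)
  show ?thesis
  proof (rule quadratic_minorant_linear_coeff_zero[where K = "q v * (norm w)\<^sup>2 - q w"])
    fix t :: real
    have "(A *v w) \<bullet> v = w \<bullet> (A *v v)" by (rule symmetric_matrix_inner_commute[OF sym])
    then have "q (v + t *\<^sub>R w) = q v + 2 * t * (w \<bullet> (A *v v)) + t\<^sup>2 * q w"
      by (simp add: q_def matrix_vector_right_distrib matrix_vector_mult_scaleR inner_add_left
          inner_add_right inner_commute[of v] algebra_simps power2_eq_square)
    moreover have "(norm (v + t *\<^sub>R w))\<^sup>2 = 1 + t\<^sup>2 * (norm w)\<^sup>2"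
      using v w norm_add_Pythagorean[of v "t *\<^sub>R w"]
      by (simp add: orthogonal_def inner_commute power_mult_distrib)
    moreover have "v + t *\<^sub>R w \<in> S" using S v w by (simp add: subspace_add subspace_scale)
    ultimately show "2 * t * (w \<bullet> (A *v v)) \<le> t\<^sup>2 * (q v * (norm w)\<^sup>2 - q w)"
      using q_le[of "v + t *\<^sub>R w"] by (simp add: algebra_simps)
  qed
qed

lemma rayleigh_maximizer_eigenvector:
  assumes inv: "\<forall>x\<in>S. A *v x \<in> S"
  shows "A *v v = (v \<bullet> (A *v v)) *\<^sub>R v"
proof -
  define w where "w = A *v v - (v \<bullet> (A *v v)) *\<^sub>R v"
  have vv: "v \<bullet> v = 1" using v by (simp add: norm_eq_1)
  have wS: "w \<in> S" unfolding w_def using S v inv by (simp add: subspace_diff subspace_scale)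
  have wv: "w \<bullet> v = 0" unfolding w_def using vv by (simp add: inner_diff_left inner_diff_right inner_commute)
  have "w \<bullet> w = w \<bullet> (A *v v) - (v \<bullet> (A *v v)) * (w \<bullet> v)" unfolding w_def by (simp add: inner_diff_right)
  also have "\<dots> = 0" using rayleigh_maximizer_orthogonal[OF wS wv] wv by simp
  finally show ?thesis unfolding w_def by simp
qed

end

lemma span_insert_orthogonal_complement:
  assumes S: "subspace S" and v: "v \<in> S" "v \<bullet> v = 1" and B: "span B = S \<inter> {y. v \<bullet> y = 0}"
  shows "S \<subseteq> span (insert v B)"
proof
  fix y assume y: "y \<in> S"
  have "y - (v \<bullet> y) *\<^sub>R v \<in> span B" unfolding B
    using y v S by (simp add: subspace_diff subspace_scale inner_diff_right)
  then have "y - (v \<bullet> y) *\<^sub>R v \<in> span (insert v B)" by (meson span_mono subsetD subset_insertI)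
  moreover have "(v \<bullet> y) *\<^sub>R v \<in> span (insert v B)" by (simp add: span_base span_mul)
  ultimately have "y - (v \<bullet> y) *\<^sub>R v + (v \<bullet> y) *\<^sub>R v \<in> span (insert v B)" by (rule span_add)
  then show "y \<in> span (insert v B)" by simp
qed

lemma rayleigh_maximizer_exists:
  fixes A :: "real^'n^'n"
  assumes S: "subspace S" "S \<noteq> {0}"
  obtains v where "v \<in> S" "norm v = 1" "\<forall>y\<in>S \<inter> sphere 0 1. y \<bullet> (A *v y) \<le> v \<bullet> (A *v v)"
proof -
  obtain x where x: "x \<in> S" "x \<noteq> 0" using S subspace_0 by blast
  then have "(1 / norm x) *\<^sub>R x \<in> S \<inter> sphere 0 1" using S(1) by (simp add: subspace_scale)
  moreover have "compact (S \<inter> sphere 0 1)" using S(1) by (intro closed_Int_compact closed_subspace) auto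
  moreover have "continuous_on (S \<inter> sphere 0 1) (\<lambda>y. y \<bullet> (A *v y))"
    by (intro continuous_intros matrix_vector_mult_linear_continuous_on)
  ultimately obtain v where "v \<in> S \<inter> sphere 0 1" "\<forall>y\<in>S \<inter> sphere 0 1. y \<bullet> (A *v y) \<le> v \<bullet> (A *v v)"
    using continuous_attains_sup[of "S \<inter> sphere 0 1"] by blast
  then show ?thesis using that by auto
qed

lemma symmetric_orthogonal_complement_invariant:
  fixes A :: "real^'n^'n"
  assumes sym: "transpose A = A" and inv: "\<forall>x\<in>S. A *v x \<in> S" and eig: "A *v v = c *\<^sub>R v"
  shows "\<forall>y\<in>S \<inter> {y. v \<bullet> y = 0}. A *v y \<in> S \<inter> {y. v \<bullet> y = 0}"
proof
  fix y assume y: "y \<in> S \<inter> {y. v \<bullet> y = 0}"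
  have "v \<bullet> (A *v y) = (A *v v) \<bullet> y" using symmetric_matrix_inner_commute[OF sym] by simp
  also have "\<dots> = 0" using y eig by simp
  finally show "A *v y \<in> S \<inter> {y. v \<bullet> y = 0}" using y inv by auto
qed

lemma symmetric_invariant_subspace_eigenbasis:
  fixes A :: "real^'n^'n"
  assumes sym: "transpose A = A"
  shows "subspace S \<Longrightarrow> \<forall>x\<in>S. A *v x \<in> S \<Longrightarrow>
    \<exists>B. B \<subseteq> S \<and> pairwise orthogonal B \<and> (\<forall>b\<in>B. norm b = 1 \<and> (\<exists>c. A *v b = c *\<^sub>R b))
        \<and> span B = S"
proof (induction "dim S" arbitrary: S rule: less_induct)
  case less
  show ?case
  proof (cases "S = {0}")
    case False
    then obtain v where vS: "v \<in> S" and nv: "norm v = 1"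
      and vmax: "\<forall>y\<in>S \<inter> sphere 0 1. y \<bullet> (A *v y) \<le> v \<bullet> (A *v v)"
      using rayleigh_maximizer_exists less.prems(1) by blast
    have eig: "A *v v = (v \<bullet> (A *v v)) *\<^sub>R v"
      by (rule rayleigh_maximizer_eigenvector[OF sym less.prems(1) vS nv vmax less.prems(2)])
    have vv: "v \<bullet> v = 1" using nv by (simp add: norm_eq_1)
    define S' where "S' = S \<inter> {y. v \<bullet> y = 0}"
    have sub': "subspace S'" unfolding S'_def using less.prems(1)
      by (auto simp: subspace_def inner_add_right)
    have inv': "\<forall>y\<in>S'. A *v y \<in> S'"
      unfolding S'_def by (rule symmetric_orthogonal_complement_invariant[OF sym less.prems(2) eig])
    have "v \<notin> S'" unfolding S'_def using vv by auto
    then have "S' \<subset> S" unfolding S'_def using vS by blast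
    then have "dim S' < dim S" using sub' less.prems(1) by (metis dim_psubset span_eq_iff)
    from less.hyps[OF this sub' inv'] obtain B' where B': "B' \<subseteq> S'" "pairwise orthogonal B'"
      "\<forall>b\<in>B'. norm b = 1 \<and> (\<exists>c. A *v b = c *\<^sub>R b)" "span B' = S'" by blast
    have BS: "insert v B' \<subseteq> S" using B'(1) vS unfolding S'_def by auto
    have "pairwise orthogonal (insert v B')"
      using B'(1,2) unfolding S'_def pairwise_insert orthogonal_def by (auto simp: inner_commute)
    moreover have "span (insert v B') = S"
      using span_insert_orthogonal_complement[OF less.prems(1) vS vv B'(4)[unfolded S'_def]]
      by (rule span_subspace[OF BS _ less.prems(1)])
    ultimately show ?thesis using BS B'(3) nv eig by (intro exI[of _ "insert v B'"]) auto
  qed (intro exI[of _ "{}"], auto)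
qed

lemma matrix_mul_eigencolumns:
  fixes A Q :: "real^'n^'n"
  assumes "\<And>j. A *v column j Q = \<nu>$j *\<^sub>R column j Q"
  shows "A ** Q = Q ** diag_mat \<nu>"
proof -
  have "(A ** Q) $ i $ j = (Q ** diag_mat \<nu>) $ i $ j" for i j
  proof -
    have "(A ** Q) $ i $ j = (A *v column j Q) $ i"
      by (simp add: matrix_matrix_mult_def matrix_vector_mult_def column_def)
    also have "\<dots> = (\<nu>$j *\<^sub>R column j Q) $ i" by (simp only: assms)
    also have "\<dots> = \<nu>$j * Q$i$j" by (simp add: column_def)
    also have "\<dots> = (Q ** diag_mat \<nu>) $ i $ j"
      by (simp add: matrix_matrix_mult_def diag_mat_def if_distrib[of "\<lambda>x. _ * x"] sum.delta' cong: if_cong)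
    finally show ?thesis .
  qed
  then show ?thesis by (simp add: vec_eq_iff)
qed

theorem symmetric_matrix_orthogonal_diagonalization:
  fixes A :: "real^'n^'n"
  assumes sym: "transpose A = A"
  obtains Q \<nu> where "orthogonal_matrix Q" "A = Q ** diag_mat \<nu> ** transpose Q"
proof -
  obtain B where B: "pairwise orthogonal B" "\<forall>b\<in>B. norm b = 1 \<and> (\<exists>c. A *v b = c *\<^sub>R b)"
    "span B = UNIV"
    using symmetric_invariant_subspace_eigenbasis[OF sym, of UNIV] by auto
  have ind: "independent B" using B(1,2) by (intro pairwise_orthogonal_independent) auto
  have "finite B" "card B = dim (UNIV :: (real^'n) set)"
    using indep_card_eq_dim_span[OF ind] B(3) by auto
  then have "finite B" "card B = card (UNIV :: 'n set)" by simp_all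
  then obtain b where bij: "bij_betw b (UNIV::'n set) B"
    using finite_same_card_bij[of "UNIV::'n set" B] by auto
  then have bB: "b j \<in> B" for j using bij_betwE by blast
  have "\<forall>j. \<exists>c. A *v b j = c *\<^sub>R b j" using B(2) bB by blast
  then obtain c where c: "\<And>j. A *v b j = c j *\<^sub>R b j" by metis
  define Q where "Q = (\<chi> i j. b j $ i)"
  have colQ: "column j Q = b j" for j unfolding Q_def column_def by simp
  have oQ: "orthogonal_matrix Q"
    unfolding orthogonal_matrix_orthonormal_columns colQ
  proof (intro conjI allI impI)
    fix i j :: 'n assume "i \<noteq> j"
    then have "b i \<noteq> b j" using bij_betw_imp_inj_on[OF bij] by (auto dest: inj_onD)
    then show "orthogonal (b i) (b j)" using B(1) bB unfolding pairwise_def by auto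
  qed (use B(2) bB in auto)
  have "A ** Q = Q ** diag_mat (\<chi> j. c j)" by (rule matrix_mul_eigencolumns) (simp add: colQ c)
  then have "A ** (Q ** transpose Q) = Q ** diag_mat (\<chi> j. c j) ** transpose Q"
    by (simp add: matrix_mul_assoc)
  then show ?thesis using oQ that unfolding orthogonal_matrix_def by auto
qed

section \<open>The ordered eigenvalue vector of an orthogonally diagonalized matrix\<close>

lemma const_poly_sum: "[:sum f S:] = (\<Sum>x\<in>S. [:f x::'a::comm_monoid_add:])"
  by (induction S rule: infinite_finite_induct) (auto, metis add_pCons add.right_neutral)

definition poly_mat :: "real^'n^'m \<Rightarrow> real poly^'n^'m" where
  "poly_mat X = (\<chi> i j. [:X$i$j:])"

lemma poly_mat_mult: "poly_mat (X ** Y) = poly_mat X ** poly_mat Y"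
  unfolding poly_mat_def matrix_matrix_mult_def by (simp add: const_poly_sum vec_eq_iff mult.commute)

lemma poly_mat_1: "poly_mat (mat 1 :: real^'n^'n) = mat 1"
  unfolding poly_mat_def mat_def by (simp add: vec_eq_iff)

lemma matrix_diff_ldistrib: "(A::'a::ring_1^'n^'m) ** (B - C) = A ** B - A ** C"
  by (simp add: matrix_matrix_mult_def vec_eq_iff sum_subtractf right_diff_distrib)

lemma matrix_diff_rdistrib: "(B - C) ** (A::'a::ring_1^'n^'m) = B ** A - C ** A"
  by (simp add: matrix_matrix_mult_def vec_eq_iff sum_subtractf left_diff_distrib)

lemma matrix_mul_mat_commute: "X ** mat c = mat c ** (X :: 'a::comm_ring_1^'n^'n)"
  by (simp add: matrix_matrix_mult_def mat_def vec_eq_iff if_distrib[of "\<lambda>x. _ * x"]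
      if_distrib[of "\<lambda>x. x * _"] sum.delta sum.delta' mult.commute cong: if_cong)

lemma charpoly_poly_mat: "charpoly A = det (mat [:0, 1:] - poly_mat A)"
  unfolding charpoly_def mat_def poly_mat_def by (rule arg_cong[where f = det]) (simp add: vec_eq_iff)

lemma charpoly_orthogonal_diagonalization:
  fixes Q :: "real^'n^'n"
  assumes "orthogonal_matrix Q"
  shows "charpoly (Q ** diag_mat \<nu> ** transpose Q) = (\<Prod>j\<in>UNIV. [:- (\<nu>$j), 1:])"
proof -
  let ?P = "poly_mat Q" and ?P' = "poly_mat (transpose Q)" and ?X = "mat [:0, 1:] :: real poly^'n^'n"
  have inv: "?P ** ?P' = mat 1"
    using assms unfolding orthogonal_matrix_def by (simp add: poly_mat_mult[symmetric] poly_mat_1)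
  have "?P ** ?X ** ?P' = ?X" by (metis inv matrix_mul_assoc matrix_mul_mat_commute matrix_mul_rid)
  then have "?X - poly_mat (Q ** diag_mat \<nu> ** transpose Q) = ?P ** (?X - poly_mat (diag_mat \<nu>)) ** ?P'"
    by (simp add: poly_mat_mult matrix_diff_ldistrib matrix_diff_rdistrib)
  then have "charpoly (Q ** diag_mat \<nu> ** transpose Q)
      = det (?X - poly_mat (diag_mat \<nu>)) * det (?P ** ?P')"
    by (simp add: charpoly_poly_mat det_mul)
  also have "\<dots> = det (?X - poly_mat (diag_mat \<nu>))" by (simp add: inv)
  also have "\<dots> = (\<Prod>j\<in>UNIV. (?X - poly_mat (diag_mat \<nu>)) $ j $ j)"
    by (rule det_diagonal) (simp add: mat_def poly_mat_def diag_mat_def)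
  finally show ?thesis by (simp add: mat_def poly_mat_def diag_mat_def)
qed

lemma order_prod_linear_factors:
  fixes \<nu> :: "real^'n"
  shows "order c (\<Prod>j\<in>S. [:- (\<nu>$j), 1:]) = card {j\<in>S. \<nu>$j = c}"
proof (induction S rule: infinite_finite_induct)
  case (insert x F)
  have "(\<Prod>j\<in>F. [:- (\<nu>$j), 1:]) \<noteq> 0" using insert.hyps(1) by (subst prod_zero_iff) auto
  then have nz: "[:- (\<nu>$x), 1:] * (\<Prod>j\<in>F. [:- (\<nu>$j), 1:]) \<noteq> 0"
    by (metis mult_eq_0_iff pCons_eq_0_iff zero_neq_one)
  then have "order c (\<Prod>j\<in>insert x F. [:- (\<nu>$j), 1:]) =
      order c [:- (\<nu>$x), 1:] + order c (\<Prod>j\<in>F. [:- (\<nu>$j), 1:])"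
    by (simp only: prod.insert[OF insert.hyps] order_mult[OF nz])
  moreover have "order c [:- (\<nu>$x), 1:] = (if \<nu>$x = c then 1 else 0)"
    using order_power_n_n[of c 1] by (auto intro: order_0I)
  moreover have "{j\<in>insert x F. \<nu>$j = c} =
      (if \<nu>$x = c then insert x {j\<in>F. \<nu>$j = c} else {j\<in>F. \<nu>$j = c})" by auto
  ultimately show ?case using insert by simp
qed simp_all

definition sorted_vec :: "real^('n::{finite,linorder}) \<Rightarrow> bool" where
  "sorted_vec l \<longleftrightarrow> (\<forall>i j. i \<le> j \<longrightarrow> l $ i \<le> l $ j)"

lemma card_sublevel_eq_sum_fibers:
  fixes l :: "real^('n::finite)"
  assumes "finite T" "range (($) l) \<subseteq> T"
  shows "card {k. l $ k \<le> c} = (\<Sum>v\<in>T. if v \<le> c then card {k. l $ k = v} else 0)"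
proof -
  have "card {k. l $ k \<le> c} = (\<Sum>k\<in>UNIV. if l $ k \<le> c then 1 else (0::nat))"
    by (simp add: sum.If_cases)
  also have "\<dots> = (\<Sum>v\<in>T. \<Sum>k\<in>{k\<in>UNIV. l $ k = v}. if l $ k \<le> c then 1 else (0::nat))"
    by (rule sum.group[symmetric]) (use assms in auto)
  also have "\<dots> = (\<Sum>v\<in>T. if v \<le> c then card {k. l $ k = v} else 0)"
    by (intro sum.cong refl) auto
  finally show ?thesis .
qed

lemma sorted_vec_entry_le_by_sublevel_card:
  assumes a: "sorted_vec a" and b: "sorted_vec b"
    and card: "card {k. a $ k \<le> a $ j} \<le> card {k. b $ k \<le> a $ j}"
  shows "b $ j \<le> a $ j"
proof (rule ccontr)
  assume lt: "\<not> b $ j \<le> a $ j"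
  have "{k. k \<le> j} \<subseteq> {k. a $ k \<le> a $ j}" using a unfolding sorted_vec_def by auto
  then have "card {k. k \<le> j} \<le> card {k. a $ k \<le> a $ j}" by (intro card_mono) auto
  moreover have "{k. b $ k \<le> a $ j} \<subseteq> {k. k < j}"
    using b lt unfolding sorted_vec_def by (auto, meson leI order.trans)
  then have "card {k. b $ k \<le> a $ j} \<le> card {k. k < j}" by (intro card_mono) auto
  moreover have "card {k. k < j} < card {k. k \<le> j}" by (intro psubset_card_mono) auto
  ultimately show False using card by linarith
qed

lemma sorted_vec_eq_by_multiplicities:
  assumes "sorted_vec l" "sorted_vec l'" and "\<And>c. card {j. l $ j = c} = card {j. l' $ j = c}"
  shows "l = l'"
proof -
  define T where "T = range (($) l) \<union> range (($) l')"
  have "finite T" unfolding T_def by simp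
  then have "card {k. l $ k \<le> c} = card {k. l' $ k \<le> c}" for c
    using card_sublevel_eq_sum_fibers[of T l c] card_sublevel_eq_sum_fibers[of T l' c]
    unfolding assms(3) T_def by simp
  then show ?thesis
    using sorted_vec_entry_le_by_sublevel_card[OF assms(1,2)] sorted_vec_entry_le_by_sublevel_card[OF assms(2,1)]
    by (metis order.antisym order.refl vec_eq_iff)
qed

lemma bij_betw_rank:
  "bij_betw (\<lambda>j. card {i. i < j}) (UNIV::'n::{finite,linorder} set) {..<CARD('n)}"
proof -
  let ?r = "\<lambda>j::'n. card {i. i < j}"
  have "strict_mono ?r" by (intro strict_monoI psubset_card_mono) auto
  then have inj: "inj ?r" by (rule strict_mono_imp_inj_on)
  have "range ?r \<subseteq> {..<CARD('n)}" by (auto intro: psubset_card_mono)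
  moreover have "card (range ?r) = card {..<CARD('n)}" using inj by (simp add: card_image)
  ultimately show ?thesis using inj by (simp add: bij_betw_def card_subset_eq)
qed

lemma sorted_vec_permutation_exists:
  fixes \<nu> :: "real^('n::{finite,linorder})"
  obtains p where "p permutes UNIV" "sorted_vec (\<chi> j. \<nu> $ p j)"
proof -
  define n where "n = CARD('n)"
  define r where "r j = card {i. i < j}" for j :: 'n
  have r: "bij_betw r UNIV {..<n}" unfolding r_def n_def by (rule bij_betw_rank)
  define e where "e = the_inv_into UNIV r"
  have e: "bij_betw e {..<n} UNIV" unfolding e_def by (rule bij_betw_the_inv_into[OF r])
  define xs where "xs = map (\<lambda>m. \<nu> $ e m) [0..<n]"
  have len: "length xs = n" by (simp add: xs_def)
  have "mset (sort xs) = mset xs" by simp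
  then obtain q where q: "q permutes {..<n}" "permute_list q xs = sort xs"
    unfolding len[symmetric] by (rule mset_eq_permutation)
  have sorted_nth: "sort xs ! m = \<nu> $ e (q m)" if "m < n" for m
  proof -
    have "sort xs ! m = xs ! q m" using q that len by (metis permute_list_nth)
    also have "\<dots> = \<nu> $ e (q m)" using permutes_in_image[OF q(1)] that by (simp add: xs_def)
    finally show ?thesis .
  qed
  define p where "p j = e (q (r j))" for j
  have "bij_betw p UNIV UNIV"
    unfolding p_def using bij_betw_trans[OF r bij_betw_trans[OF permutes_imp_bij[OF q(1)] e]]
    by (simp add: comp_def)
  then have "p permutes UNIV" by (intro bij_imp_permutes) auto
  moreover have "sorted_vec (\<chi> j. \<nu> $ p j)"
    unfolding sorted_vec_def
  proof (intro allI impI)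
    fix i j :: 'n assume "i \<le> j"
    then have "r i \<le> r j" unfolding r_def by (intro card_mono) auto
    moreover have "r i < n" "r j < n" using bij_betwE[OF r] by auto
    ultimately have "sort xs ! r i \<le> sort xs ! r j" by (intro sorted_nth_mono) (simp_all add: len)
    then show "(\<chi> j. \<nu> $ p j) $ i \<le> (\<chi> j. \<nu> $ p j) $ j"
      using sorted_nth \<open>r i < n\<close> \<open>r j < n\<close> unfolding p_def by simp
  qed
  ultimately show ?thesis by (rule that)
qed

lemma card_fiber_permute:
  assumes "p permutes UNIV"
  shows "card {j. \<nu> $ p j = c} = card {k. \<nu> $ k = c}"
proof -
  have "p ` {j. \<nu> $ p j = c} = {k. \<nu> $ k = c}"
    using permutes_surj[OF assms] by (auto simp: image_iff)
  moreover have "inj_on p {j. \<nu> $ p j = c}" using permutes_inj[OF assms] by (simp add: inj_on_def inj_def)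
  ultimately show ?thesis by (metis card_image)
qed

lemma eigvals_orthogonal_diagonalization:
  fixes Q :: "real^('n::{finite,linorder})^('n::{finite,linorder})"
  assumes "orthogonal_matrix Q"
  obtains p where "p permutes UNIV" "eigvals (Q ** diag_mat \<nu> ** transpose Q) = (\<chi> j. \<nu> $ p j)"
proof -
  let ?A = "Q ** diag_mat \<nu> ** transpose Q"
  obtain p where p: "p permutes UNIV" "sorted_vec (\<chi> j. \<nu> $ p j)" by (rule sorted_vec_permutation_exists)
  have mult: "card {j. (\<chi> j. \<nu> $ p j) $ j = c} = order c (charpoly ?A)" for c
    using card_fiber_permute[OF p(1), of \<nu> c]
    by (simp add: charpoly_orthogonal_diagonalization[OF assms] order_prod_linear_factors)
  have "eigvals ?A = (\<chi> j. \<nu> $ p j)"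
    unfolding eigvals_def
  proof (rule the_equality)
    show "(\<forall>i j. i \<le> j \<longrightarrow> (\<chi> j. \<nu> $ p j) $ i \<le> (\<chi> j. \<nu> $ p j) $ j) \<and>
        (\<forall>c. card {j. (\<chi> j. \<nu> $ p j) $ j = c} = order c (charpoly ?A))"
      using p(2) mult unfolding sorted_vec_def by blast
    fix l :: "real^('n::{finite,linorder})"
    assume l: "(\<forall>i j. i \<le> j \<longrightarrow> l $ i \<le> l $ j) \<and> (\<forall>c. card {j. l $ j = c} = order c (charpoly ?A))"
    show "l = (\<chi> j. \<nu> $ p j)"
    proof (rule sorted_vec_eq_by_multiplicities)
      show "sorted_vec l" using l unfolding sorted_vec_def by blast
      show "card {j. l $ j = c} = card {j. (\<chi> j. \<nu> $ p j) $ j = c}" for c by (metis l mult)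
    qed (rule p(2))
  qed
  with p(1) show ?thesis by (rule that)
qed

section \<open>Eigenvalue perturbation of nearly diagonal symmetric matrices\<close>

definition diag_deviation :: "real^'n^'n \<Rightarrow> real^'n \<Rightarrow> real" where
  "diag_deviation Y D = (\<Sum>j\<in>UNIV. \<Sum>l\<in>UNIV. \<bar>(Y - diag_mat D) $ j $ l\<bar>)"

(* The entry 1 only keeps the minimum well defined when all entries of D coincide. *)
definition spectral_gap :: "real^'n \<Rightarrow> real" where
  "spectral_gap D = Min (insert 1 {\<bar>D$j - D$k\<bar> | j k. D$j \<noteq> D$k})"

lemma finite_spectral_differences: "finite {\<bar>D$j - D$k\<bar> | j k. D$j \<noteq> D$k}"
proof -
  have "{\<bar>D$j - D$k\<bar> | j k. D$j \<noteq> D$k} \<subseteq> (\<lambda>(j, k). \<bar>D$j - D$k\<bar>) ` UNIV" by auto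
  then show ?thesis by (rule finite_subset) simp
qed

lemma spectral_gap_pos: "spectral_gap D > 0"
  using finite_spectral_differences[of D] by (auto simp: spectral_gap_def Min_gr_iff)

lemma spectral_gap_le: "D$j \<noteq> D$k \<Longrightarrow> spectral_gap D \<le> \<bar>D$j - D$k\<bar>"
  unfolding spectral_gap_def using finite_spectral_differences[of D] by (intro Min_le) auto

lemma diag_deviation_nonneg: "diag_deviation Y D \<ge> 0"
  unfolding diag_deviation_def by (intro sum_nonneg) auto

context
  fixes Q :: "real^'n^'n" and \<nu> D :: "real^'n"
  assumes Q: "orthogonal_matrix Q"
begin

lemma diag_deviation_eigvec_entry:
  "\<bar>D$j - \<nu>$k\<bar> * \<bar>Q$j$k\<bar> \<le> diag_deviation (Q ** diag_mat \<nu> ** transpose Q) D"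
proof -
  define F where "F j l = (Q ** diag_mat \<nu> ** transpose Q - diag_mat D) $ j $ l" for j l
  have "(\<Sum>l\<in>UNIV. (Q ** diag_mat \<nu> ** transpose Q)$j$l * Q$l$k)
      = (\<Sum>l\<in>UNIV. F j l * Q$l$k + (if j = l then D$j * Q$l$k else 0))"
    by (intro sum.cong) (auto simp: F_def diag_mat_def algebra_simps)
  also have "\<dots> = (\<Sum>l\<in>UNIV. F j l * Q$l$k) + D$j * Q$j$k" by (simp add: sum.distrib)
  finally have "(D$j - \<nu>$k) * Q$j$k = - (\<Sum>l\<in>UNIV. F j l * Q$l$k)"
    using orthogonal_diagonalization_column[OF Q, of \<nu> j k] by (simp add: algebra_simps)
  then have "\<bar>D$j - \<nu>$k\<bar> * \<bar>Q$j$k\<bar> = \<bar>\<Sum>l\<in>UNIV. F j l * Q$l$k\<bar>" by (simp add: abs_mult[symmetric])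
  also have "\<dots> \<le> (\<Sum>l\<in>UNIV. \<bar>F j l\<bar> * \<bar>Q$l$k\<bar>)" by (rule order_trans[OF sum_abs]) (simp add: abs_mult)
  also have "\<dots> \<le> (\<Sum>l\<in>UNIV. \<bar>F j l\<bar>)"
    by (intro sum_mono) (simp add: mult_left_le orthogonal_matrix_entry_abs_le_1[OF Q])
  also have "\<dots> \<le> (\<Sum>j\<in>UNIV. \<Sum>l\<in>UNIV. \<bar>F j l\<bar>)"
    by (rule member_le_sum[where f = "\<lambda>j. \<Sum>l\<in>UNIV. \<bar>F j l\<bar>"]) (auto intro: sum_nonneg)
  finally show ?thesis unfolding F_def diag_deviation_def .
qed

lemma eigenvalue_near_diagonal_entry:
  obtains j where "\<bar>\<nu>$k - D$j\<bar> \<le> real CARD('n) * diag_deviation (Q ** diag_mat \<nu> ** transpose Q) D"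
proof -
  obtain j where j: "1 / real CARD('n) \<le> \<bar>Q$j$k\<bar>" using orthogonal_matrix_large_entry[OF Q] .
  have "\<bar>D$j - \<nu>$k\<bar> * (1 / real CARD('n)) \<le> \<bar>D$j - \<nu>$k\<bar> * \<bar>Q$j$k\<bar>"
    using j by (intro mult_left_mono) auto
  also have "\<dots> \<le> diag_deviation (Q ** diag_mat \<nu> ** transpose Q) D" by (rule diag_deviation_eigvec_entry)
  finally show ?thesis by (intro that) (simp add: field_simps abs_minus_commute)
qed

lemma eigvec_entry_off_cluster:
  assumes near: "2 * \<bar>\<nu>$k - D$c\<bar> < spectral_gap D" and ne: "D$j \<noteq> D$c"
  shows "(Q$j$k)\<^sup>2 \<le> (2 * diag_deviation (Q ** diag_mat \<nu> ** transpose Q) D / spectral_gap D)\<^sup>2"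
proof -
  let ?\<gamma> = "spectral_gap D" and ?\<phi> = "diag_deviation (Q ** diag_mat \<nu> ** transpose Q) D"
  have "?\<gamma> \<le> \<bar>D$j - \<nu>$k\<bar> + \<bar>\<nu>$k - D$c\<bar>"
    using spectral_gap_le[OF ne] abs_triangle_ineq[of "D$j - \<nu>$k" "\<nu>$k - D$c"] by simp
  then have "?\<gamma> / 2 \<le> \<bar>D$j - \<nu>$k\<bar>" using near by argo
  then have "?\<gamma> / 2 * \<bar>Q$j$k\<bar> \<le> ?\<phi>"
    using diag_deviation_eigvec_entry[of j k] by (meson abs_ge_zero mult_right_mono order_trans)
  then have "\<bar>Q$j$k\<bar> \<le> 2 * ?\<phi> / ?\<gamma>" using spectral_gap_pos[of D] by (simp add: field_simps)
  then show ?thesis by (metis abs_ge_zero power2_abs power_mono)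
qed

end

lemma orthogonal_matrix_cluster_card_le:
  fixes Q :: "real^'n^'n" and D :: "real^'n" and cl :: "'n \<Rightarrow> 'n"
  assumes Q: "orthogonal_matrix Q" and off: "\<And>j k. D$j \<noteq> D$(cl k) \<Longrightarrow> (Q$j$k)\<^sup>2 \<le> \<delta>"
    and \<delta>: "\<delta> \<ge> 0" "real CARD('n) * real CARD('n) * \<delta> < 1"
  shows "card {k. D$(cl k) = c} \<le> card {j. D$j = c}"
proof -
  define N where "N = real CARD('n)"
  define K where "K = {k. D$(cl k) = c}"
  define C where "C = {j. D$j = c}"
  have "(\<Sum>k\<in>K. \<Sum>j\<in>C. (Q$j$k)\<^sup>2) = (\<Sum>j\<in>C. \<Sum>k\<in>K. (Q$j$k)\<^sup>2)" by (rule sum.swap)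
  also have "\<dots> \<le> (\<Sum>j\<in>C. \<Sum>k\<in>UNIV. (Q$j$k)\<^sup>2)" by (intro sum_mono sum_mono2) auto
  also have "\<dots> = real (card C)" using orthogonal_matrix_row_sum_squares[OF Q] by simp
  finally have upper: "(\<Sum>k\<in>K. \<Sum>j\<in>C. (Q$j$k)\<^sup>2) \<le> real (card C)" .
  have lower: "1 - N * \<delta> \<le> (\<Sum>j\<in>C. (Q$j$k)\<^sup>2)" if "k \<in> K" for k
  proof -
    have "1 = (\<Sum>j\<in>UNIV. (Q$j$k)\<^sup>2)" using orthogonal_matrix_column_sum_squares[OF Q] by simp
    also have "\<dots> = (\<Sum>j\<in>C. (Q$j$k)\<^sup>2) + (\<Sum>j\<in>UNIV - C. (Q$j$k)\<^sup>2)"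
      by (subst sum.subset_diff[of C]) auto
    also have "(\<Sum>j\<in>UNIV - C. (Q$j$k)\<^sup>2) \<le> (\<Sum>j\<in>UNIV - C. \<delta>)"
      using that off unfolding K_def C_def by (intro sum_mono) auto
    also have "\<dots> \<le> N * \<delta>" unfolding N_def using \<delta>(1) by (simp add: card_mono mult_right_mono)
    finally show ?thesis by simp
  qed
  have "real (card K) * (1 - N * \<delta>) = (\<Sum>k\<in>K. 1 - N * \<delta>)" by simp
  also have "\<dots> \<le> (\<Sum>k\<in>K. \<Sum>j\<in>C. (Q$j$k)\<^sup>2)" using lower by (intro sum_mono) auto
  finally have "real (card K) * (1 - N * \<delta>) \<le> real (card C)" using upper by simp
  moreover have "real (card K) \<le> N" unfolding N_def by (simp add: card_mono)
  then have "real (card K) * (N * \<delta>) \<le> N * (N * \<delta>)" using \<delta>(1) by (intro mult_right_mono) auto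
  ultimately have "real (card K) < real (card C) + 1" using \<delta>(2) unfolding N_def by (simp add: algebra_simps)
  then show ?thesis unfolding K_def C_def by linarith
qed

lemma fiber_cards_le_imp_eq:
  fixes f h :: "'n::finite \<Rightarrow> 'a"
  assumes range: "range f \<subseteq> range h" and le: "\<And>c. card {k. f k = c} \<le> card {j. h j = c}"
  shows "card {k. f k = c} = card {j. h j = c}"
proof (rule ccontr)
  assume ne: "card {k. f k = c} \<noteq> card {j. h j = c}"
  have c: "c \<in> range h"
  proof (rule ccontr)
    assume "c \<notin> range h"
    then have "{j. h j = c} = {}" "{k. f k = c} = {}" using range by auto
    then show False using ne by simp
  qed
  have "card (UNIV::'n set) = (\<Sum>v\<in>range h. card {k. f k = v})"
    using sum.group[of UNIV "range h" f "\<lambda>_. 1::nat"] range by auto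
  also have "\<dots> < (\<Sum>v\<in>range h. card {j. h j = v})"
  proof (rule sum_strict_mono_ex1)
    show "\<exists>v\<in>range h. card {k. f k = v} < card {j. h j = v}"
      using le[of c] ne c by (intro bexI[of _ c]) auto
  qed (use le in auto)
  also have "\<dots> = card (UNIV::'n set)"
    using sum.group[of UNIV "range h" h "\<lambda>_. 1::nat"] by simp
  finally show False by simp
qed

lemma permutation_matching_fibers:
  fixes g1 g2 :: "'n::finite \<Rightarrow> 'a"
  assumes "\<And>c. card {j. g1 j = c} = card {k. g2 k = c}"
  obtains p where "p permutes UNIV" "\<And>j. g2 (p j) = g1 j"
proof -
  have "\<forall>c. \<exists>b. bij_betw b {j. g1 j = c} {k. g2 k = c}"
    using assms by (intro allI finite_same_card_bij) auto
  then obtain b where b: "\<And>c. bij_betw (b c) {j. g1 j = c} {k. g2 k = c}" by metis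
  define p where "p j = b (g1 j) j" for j
  have p: "g2 (p j) = g1 j" for j using bij_betwE[OF b[of "g1 j"]] unfolding p_def by auto
  have "inj p"
  proof (rule injI)
    fix j k assume "p j = p k"
    then have "g1 j = g1 k" "b (g1 j) j = b (g1 j) k" using p unfolding p_def by metis+
    then show "j = k" using bij_betw_imp_inj_on[OF b[of "g1 j"]] by (auto dest: inj_onD)
  qed
  then have "bij p" using finite_UNIV_inj_surj[of p] by (simp add: bij_def)
  then have "p permutes UNIV" by (intro bij_imp_permutes) auto
  then show ?thesis using p that by blast
qed

context
  fixes Q :: "real^'n^'n" and D \<mu> :: "real^'n" and cl :: "'n \<Rightarrow> 'n" and \<delta> :: real
  assumes Q: "orthogonal_matrix Q" and off: "\<And>j k. D$j \<noteq> D$(cl k) \<Longrightarrow> (Q$j$k)\<^sup>2 \<le> \<delta>"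
    and \<delta>: "\<delta> \<ge> 0" and \<mu>: "\<And>j k. D$j = D$k \<Longrightarrow> \<mu>$j = \<mu>$k"
begin

lemma cluster_weight_deviation:
  "\<bar>\<mu>$(cl k) - (\<Sum>j\<in>UNIV. \<mu>$j * (Q$j$k)\<^sup>2)\<bar> \<le> real CARD('n) * (2 * (\<Sum>j\<in>UNIV. \<bar>\<mu>$j\<bar>) * \<delta>)"
proof -
  let ?M = "\<Sum>j\<in>UNIV. \<bar>\<mu>$j\<bar>"
  have M: "\<bar>\<mu>$j\<bar> \<le> ?M" for j by (rule member_le_sum[where f = "\<lambda>j. \<bar>\<mu>$j\<bar>"]) auto
  have "\<mu>$(cl k) - (\<Sum>j\<in>UNIV. \<mu>$j * (Q$j$k)\<^sup>2) = (\<Sum>j\<in>UNIV. (\<mu>$(cl k) - \<mu>$j) * (Q$j$k)\<^sup>2)"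
    using orthogonal_matrix_column_sum_squares[OF Q, of k]
    by (simp add: algebra_simps sum_subtractf sum_distrib_left[symmetric])
  also have "\<bar>\<dots>\<bar> \<le> (\<Sum>j\<in>UNIV. \<bar>\<mu>$(cl k) - \<mu>$j\<bar> * (Q$j$k)\<^sup>2)"
    by (rule order_trans[OF sum_abs]) (simp add: abs_mult)
  also have "\<dots> \<le> (\<Sum>j\<in>(UNIV::'n set). 2 * ?M * \<delta>)"
  proof (intro sum_mono)
    fix j
    show "\<bar>\<mu>$(cl k) - \<mu>$j\<bar> * (Q$j$k)\<^sup>2 \<le> 2 * ?M * \<delta>"
    proof (cases "D$j = D$(cl k)")
      case True
      then show ?thesis using \<mu>[OF True] \<delta> M[of j] by simp
    next
      case False
      have "\<bar>\<mu>$(cl k) - \<mu>$j\<bar> \<le> 2 * ?M" using M[of j] M[of "cl k"] by linarith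
      then show ?thesis using off[OF False] by (intro mult_mono) auto
    qed
  qed
  finally show ?thesis by simp
qed

lemma weighted_eigenvalue_deviation:
  assumes p: "p permutes UNIV" and match: "\<And>j. D$(cl (p j)) = D$j"
  shows "\<bar>(\<Sum>j\<in>UNIV. \<mu>$j * \<nu>$(p j)) - (\<Sum>j\<in>UNIV. \<mu>$j * (Q ** diag_mat \<nu> ** transpose Q)$j$j)\<bar>
    \<le> (\<Sum>k\<in>UNIV. \<bar>\<nu>$k\<bar>) * (real CARD('n) * (2 * (\<Sum>j\<in>UNIV. \<bar>\<mu>$j\<bar>) * \<delta>))"
proof -
  let ?w = "\<lambda>k. \<Sum>j\<in>UNIV. \<mu>$j * (Q$j$k)\<^sup>2" and ?B = "real CARD('n) * (2 * (\<Sum>j\<in>UNIV. \<bar>\<mu>$j\<bar>) * \<delta>)"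
  have "(\<Sum>j\<in>UNIV. \<mu>$j * \<nu>$(p j)) = (\<Sum>j\<in>UNIV. \<mu>$(cl (p j)) * \<nu>$(p j))"
    using \<mu>[OF match[symmetric]] by simp
  also have "\<dots> = (\<Sum>k\<in>UNIV. \<mu>$(cl k) * \<nu>$k)"
    using sum.permute[OF p, of "\<lambda>k. \<mu>$(cl k) * \<nu>$k"] by (simp add: comp_def)
  finally have eig: "(\<Sum>j\<in>UNIV. \<mu>$j * \<nu>$(p j)) = (\<Sum>k\<in>UNIV. \<mu>$(cl k) * \<nu>$k)" .
  have "(\<Sum>j\<in>UNIV. \<mu>$j * (Q ** diag_mat \<nu> ** transpose Q)$j$j) = (\<Sum>j\<in>UNIV. \<Sum>k\<in>UNIV. \<nu>$k * (\<mu>$j * (Q$j$k)\<^sup>2))"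
    by (simp add: conj_diag_mat_entry sum_distrib_left power2_eq_square mult_ac)
  also have "\<dots> = (\<Sum>k\<in>UNIV. \<nu>$k * ?w k)" by (subst sum.swap) (simp add: sum_distrib_left)
  finally have "\<bar>(\<Sum>j\<in>UNIV. \<mu>$j * \<nu>$(p j)) - (\<Sum>j\<in>UNIV. \<mu>$j * (Q ** diag_mat \<nu> ** transpose Q)$j$j)\<bar>
      = \<bar>\<Sum>k\<in>UNIV. \<nu>$k * (\<mu>$(cl k) - ?w k)\<bar>"
    unfolding eig by (simp add: sum_subtractf algebra_simps)
  also have "\<dots> \<le> (\<Sum>k\<in>UNIV. \<bar>\<nu>$k\<bar> * ?B)"
    by (rule order_trans[OF sum_abs]) (auto intro!: sum_mono mult_left_mono cluster_weight_deviation simp: abs_mult)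
  finally show ?thesis by (simp add: sum_distrib_right)
qed

end

definition perturbation_const :: "real^'n \<Rightarrow> real^'n \<Rightarrow> real" where
  "perturbation_const D \<mu> = 8 * real CARD('n) * (\<Sum>j\<in>UNIV. \<bar>\<mu>$j\<bar>)
     * ((\<Sum>j\<in>UNIV. \<bar>D$j\<bar>) + real CARD('n) * spectral_gap D) / (spectral_gap D)\<^sup>2"

lemma perturbation_const_nonneg: "perturbation_const D \<mu> \<ge> 0"
  unfolding perturbation_const_def using spectral_gap_pos[of D]
  by (intro divide_nonneg_pos mult_nonneg_nonneg add_nonneg_nonneg sum_nonneg) auto

(* Every eigenvalue nu_k is assigned a nearby diagonal entry D_(cl k); as the columns of Q
   concentrate on the corresponding clusters, counting shows that cl hits each cluster exactly as
   often as D does, which yields the matching permutation. *)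
lemma eigenvalue_cluster_matching:
  fixes Q :: "real^'n^'n" and \<nu> D :: "real^'n"
  defines "\<phi> \<equiv> diag_deviation (Q ** diag_mat \<nu> ** transpose Q) D"
  assumes Q: "orthogonal_matrix Q" and small: "2 * real CARD('n) * \<phi> < spectral_gap D"
  obtains cl p where "p permutes UNIV" "\<And>j. D$(cl (p j)) = D$j" "\<And>k. \<bar>\<nu>$k - D$(cl k)\<bar> \<le> real CARD('n) * \<phi>"
    "\<And>j k. D$j \<noteq> D$(cl k) \<Longrightarrow> (Q$j$k)\<^sup>2 \<le> (2 * \<phi> / spectral_gap D)\<^sup>2"
proof -
  define N where "N = real CARD('n)"
  define \<delta> where "\<delta> = (2 * \<phi> / spectral_gap D)\<^sup>2"
  have N: "N \<ge> 1" and \<phi>: "\<phi> \<ge> 0" by (auto simp: N_def \<phi>_def Suc_leI diag_deviation_nonneg)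
  have "\<forall>k. \<exists>j. \<bar>\<nu>$k - D$j\<bar> \<le> N * \<phi>"
    using eigenvalue_near_diagonal_entry[OF Q] unfolding N_def \<phi>_def by metis
  then obtain cl where cl: "\<And>k. \<bar>\<nu>$k - D$(cl k)\<bar> \<le> N * \<phi>" by metis
  have off: "(Q$j$k)\<^sup>2 \<le> \<delta>" if "D$j \<noteq> D$(cl k)" for j k
    unfolding \<delta>_def \<phi>_def
    using cl[of k] small that by (intro eigvec_entry_off_cluster[OF Q]) (auto simp: N_def \<phi>_def)
  have "(N * (2 * \<phi>))\<^sup>2 < (spectral_gap D)\<^sup>2" using small N \<phi> by (intro power_strict_mono) (auto simp: N_def)
  then have "N * N * \<delta> < 1"
    using spectral_gap_pos[of D] unfolding \<delta>_def by (simp add: field_simps power2_eq_square)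
  then have "card {k. D$(cl k) = c} \<le> card {j. D$j = c}" for c
    using orthogonal_matrix_cluster_card_le[OF Q off] unfolding N_def \<delta>_def by simp
  then have "card {j. D$j = c} = card {k. D$(cl k) = c}" for c
    by (intro fiber_cards_le_imp_eq[symmetric]) auto
  then obtain p where "p permutes UNIV" "\<And>j. D$(cl (p j)) = D$j"
    using permutation_matching_fibers[of "\<lambda>j. D$j" "\<lambda>k. D$(cl k)"] by blast
  with cl off show ?thesis using that unfolding N_def \<delta>_def by blast
qed

theorem eigenvalue_perturbation:
  fixes Q :: "real^'n^'n" and \<nu> D \<mu> :: "real^'n"
  defines "\<phi> \<equiv> diag_deviation (Q ** diag_mat \<nu> ** transpose Q) D"
  assumes Q: "orthogonal_matrix Q" and small: "2 * real CARD('n) * \<phi> < spectral_gap D"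
    and \<mu>: "\<And>j k. D$j = D$k \<Longrightarrow> \<mu>$j = \<mu>$k"
  obtains p where "p permutes UNIV" "\<And>j. \<bar>\<nu>$(p j) - D$j\<bar> \<le> real CARD('n) * \<phi>"
    "\<bar>(\<Sum>j\<in>UNIV. \<mu>$j * \<nu>$(p j)) - (\<Sum>j\<in>UNIV. \<mu>$j * (Q ** diag_mat \<nu> ** transpose Q)$j$j)\<bar>
       \<le> perturbation_const D \<mu> * \<phi>\<^sup>2"
proof -
  define N where "N = real CARD('n)"
  define \<gamma> where "\<gamma> = spectral_gap D"
  define \<delta> where "\<delta> = (2 * \<phi> / \<gamma>)\<^sup>2"
  obtain cl p where p: "p permutes UNIV" and match: "\<And>j. D$(cl (p j)) = D$j"
    and cl: "\<And>k. \<bar>\<nu>$k - D$(cl k)\<bar> \<le> N * \<phi>" and off: "\<And>j k. D$j \<noteq> D$(cl k) \<Longrightarrow> (Q$j$k)\<^sup>2 \<le> \<delta>"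
    using eigenvalue_cluster_matching[OF Q small[unfolded \<phi>_def]] unfolding N_def \<delta>_def \<gamma>_def \<phi>_def by metis
  have N: "N \<ge> 1" and \<gamma>: "\<gamma> > 0" and \<phi>: "\<phi> \<ge> 0"
    using spectral_gap_pos by (auto simp: N_def \<gamma>_def \<phi>_def Suc_leI diag_deviation_nonneg)
  have near: "\<bar>\<nu>$(p j) - D$j\<bar> \<le> N * \<phi>" for j using cl[of "p j"] match[of j] by simp
  have "0 \<le> N * \<phi>" using N \<phi> by simp
  then have "N * \<phi> \<le> \<gamma>" using small unfolding N_def \<gamma>_def by (simp add: mult.assoc)
  then have "\<bar>\<nu>$(p j)\<bar> \<le> \<bar>D$j\<bar> + \<gamma>" for j using near[of j] by argo
  then have "(\<Sum>j\<in>UNIV. \<bar>\<nu>$(p j)\<bar>) \<le> (\<Sum>j\<in>UNIV. \<bar>D$j\<bar>) + N * \<gamma>"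
    using sum_mono[of UNIV "\<lambda>j. \<bar>\<nu>$(p j)\<bar>" "\<lambda>j. \<bar>D$j\<bar> + \<gamma>"] by (simp add: sum.distrib N_def)
  moreover have "(\<Sum>j\<in>UNIV. \<bar>\<nu>$(p j)\<bar>) = (\<Sum>k\<in>UNIV. \<bar>\<nu>$k\<bar>)"
    using sum.permute[OF p, of "\<lambda>k. \<bar>\<nu>$k\<bar>"] by (simp add: comp_def)
  moreover have "perturbation_const D \<mu> * \<phi>\<^sup>2
      = ((\<Sum>j\<in>UNIV. \<bar>D$j\<bar>) + N * \<gamma>) * (N * (2 * (\<Sum>j\<in>UNIV. \<bar>\<mu>$j\<bar>) * \<delta>))"
    unfolding perturbation_const_def \<delta>_def N_def \<gamma>_def using \<gamma>
    by (simp add: \<gamma>_def field_simps power2_eq_square)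
  ultimately have "(\<Sum>k\<in>UNIV. \<bar>\<nu>$k\<bar>) * (N * (2 * (\<Sum>j\<in>UNIV. \<bar>\<mu>$j\<bar>) * \<delta>))
      \<le> perturbation_const D \<mu> * \<phi>\<^sup>2"
    using N by (auto intro!: mult_right_mono mult_nonneg_nonneg sum_nonneg simp: \<delta>_def)
  moreover have "\<delta> \<ge> 0" by (simp add: \<delta>_def)
  note weighted_eigenvalue_deviation[OF Q off this \<mu> p match]
  ultimately show ?thesis using that[OF p] near unfolding N_def by (meson order_trans)
qed

section \<open>Derivative of spectral functions\<close>

lemma symmetric_fun_gradient_eq:
  fixes J :: "real^'n \<Rightarrow> real"
  assumes sym: "symmetric_fun J" and der: "(J has_derivative (\<lambda>h. g \<bullet> h)) (at l)"
    and eq: "l$a = l$b"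
  shows "g$a = g$b"
proof -
  define T where "T h = (\<chi> j. h $ Transposition.transpose a b j)" for h :: "real^'n"
  have "linear T" unfolding T_def by (auto intro!: linearI simp: vec_eq_iff)
  then have dT: "(T has_derivative T) (at l)" by (simp add: linear_conv_bounded_linear bounded_linear_imp_has_derivative)
  have "T l = l" unfolding T_def using eq by (simp add: vec_eq_iff Transposition.transpose_def)
  moreover have "J (T h) = J h" for h
    using sym permutes_swap_id[of a UNIV b] unfolding symmetric_fun_def T_def by simp
  ultimately have "(J has_derivative (\<lambda>h. g \<bullet> T h)) (at l)"
    using has_derivative_compose[OF dT, of J "\<lambda>h. g \<bullet> h"] der by simp
  then have "(\<lambda>h. g \<bullet> T h) = (\<lambda>h. g \<bullet> h)" using der by (rule has_derivative_unique)
  then have "g \<bullet> T (axis a 1) = g \<bullet> axis a 1" by metis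
  moreover have "T (axis a 1) = axis b 1" unfolding T_def
    by (auto simp: vec_eq_iff axis_def Transposition.transpose_def)
  ultimately show ?thesis by (simp add: inner_axis)
qed

lemma conj_entry:
  fixes U Z :: "real^'n^'n"
  shows "(transpose U ** Z ** U) $ j $ l = (\<Sum>a\<in>UNIV. \<Sum>b\<in>UNIV. U$a$j * Z$a$b * U$b$l)"
proof -
  have "(transpose U ** Z ** U) $ j $ l = (\<Sum>b\<in>UNIV. \<Sum>a\<in>UNIV. U$a$j * Z$a$b * U$b$l)"
    by (simp add: matrix_matrix_mult_def transpose_def sum_distrib_right)
  also have "\<dots> = (\<Sum>a\<in>UNIV. \<Sum>b\<in>UNIV. U$a$j * Z$a$b * U$b$l)" by (rule sum.swap)
  finally show ?thesis .
qed

lemma trace_weighted_conj: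
  fixes U Z :: "real^'n^'n"
  shows "(\<Sum>j\<in>UNIV. \<mu>$j * (transpose U ** Z ** U) $ j $ j) = (U ** diag_mat \<mu> ** transpose U) \<bullet> Z"
proof -
  have "(\<Sum>j\<in>UNIV. \<mu>$j * (transpose U ** Z ** U) $ j $ j)
      = (\<Sum>j\<in>UNIV. \<Sum>a\<in>UNIV. \<Sum>b\<in>UNIV. U$a$j * \<mu>$j * U$b$j * Z$a$b)"
    unfolding conj_entry by (simp add: sum_distrib_left mult_ac)
  also have "\<dots> = (\<Sum>a\<in>UNIV. \<Sum>j\<in>UNIV. \<Sum>b\<in>UNIV. U$a$j * \<mu>$j * U$b$j * Z$a$b)"
    by (rule sum.swap)
  also have "\<dots> = (\<Sum>a\<in>UNIV. \<Sum>b\<in>UNIV. \<Sum>j\<in>UNIV. U$a$j * \<mu>$j * U$b$j * Z$a$b)"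
    by (rule sum.cong[OF refl], rule sum.swap)
  also have "\<dots> = (U ** diag_mat \<mu> ** transpose U) \<bullet> Z"
    by (simp add: inner_vec_def conj_diag_mat_entry sum_distrib_right)
  finally show ?thesis .
qed

lemma sum_abs_entries_le_norm:
  fixes E :: "real^'n^'m"
  shows "(\<Sum>a\<in>UNIV. \<Sum>b\<in>UNIV. \<bar>E$a$b\<bar>) \<le> real CARD('m) * real CARD('n) * norm E"
proof -
  have "\<bar>E$a$b\<bar> \<le> norm E" for a b
    using component_le_norm_cart[of "E$a" b] Finite_Cartesian_Product.norm_nth_le[of E a] by linarith
  then have "(\<Sum>a\<in>UNIV. \<Sum>b\<in>UNIV. \<bar>E$a$b\<bar>) \<le> (\<Sum>a\<in>(UNIV::'m set). \<Sum>b\<in>(UNIV::'n set). norm E)"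
    by (intro sum_mono)
  then show ?thesis by simp
qed

lemma orthogonal_conj_entry_le:
  fixes U E :: "real^'n^'n"
  assumes U: "orthogonal_matrix U"
  shows "\<bar>(transpose U ** E ** U) $ j $ l\<bar> \<le> (\<Sum>a\<in>UNIV. \<Sum>b\<in>UNIV. \<bar>E$a$b\<bar>)"
proof -
  have "\<bar>(transpose U ** E ** U) $ j $ l\<bar> = \<bar>\<Sum>a\<in>UNIV. \<Sum>b\<in>UNIV. U$a$j * E$a$b * U$b$l\<bar>"
    by (simp only: conj_entry)
  also have "\<dots> \<le> (\<Sum>a\<in>UNIV. \<Sum>b\<in>UNIV. \<bar>U$a$j * E$a$b * U$b$l\<bar>)"
    by (rule order_trans[OF sum_abs]) (intro sum_mono sum_abs)
  also have "\<dots> \<le> (\<Sum>a\<in>UNIV. \<Sum>b\<in>UNIV. \<bar>E$a$b\<bar>)"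
  proof (intro sum_mono)
    fix a b
    have "\<bar>U$a$j\<bar> * \<bar>U$b$l\<bar> \<le> 1"
      using orthogonal_matrix_entry_abs_le_1[OF U] by (simp add: mult_le_one)
    then have "\<bar>E$a$b\<bar> * (\<bar>U$a$j\<bar> * \<bar>U$b$l\<bar>) \<le> \<bar>E$a$b\<bar> * 1" by (intro mult_left_mono) auto
    then show "\<bar>U$a$j * E$a$b * U$b$l\<bar> \<le> \<bar>E$a$b\<bar>" by (simp add: abs_mult mult_ac)
  qed
  finally show ?thesis .
qed

lemma diag_deviation_orthogonal_conj_le:
  fixes U A A0 :: "real^'n^'n"
  assumes U: "orthogonal_matrix U" and A0: "transpose U ** A0 ** U = diag_mat l0"
  shows "diag_deviation (transpose U ** A ** U) l0 \<le> real CARD('n) ^ 4 * norm (A - A0)"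
proof -
  have eq: "transpose U ** A ** U - diag_mat l0 = transpose U ** (A - A0) ** U"
    by (simp only: A0[symmetric] matrix_diff_ldistrib matrix_diff_rdistrib)
  have entry: "\<bar>(transpose U ** A ** U - diag_mat l0) $ j $ l\<bar> \<le> real CARD('n) * real CARD('n) * norm (A - A0)"
    for j l
  proof -
    have "\<bar>(transpose U ** A ** U - diag_mat l0) $ j $ l\<bar> = \<bar>(transpose U ** (A - A0) ** U) $ j $ l\<bar>"
      by (simp only: eq)
    also have "\<dots> \<le> (\<Sum>a\<in>UNIV. \<Sum>b\<in>UNIV. \<bar>(A - A0)$a$b\<bar>)" by (rule orthogonal_conj_entry_le[OF U])
    also have "\<dots> \<le> real CARD('n) * real CARD('n) * norm (A - A0)" by (rule sum_abs_entries_le_norm)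
    finally show ?thesis .
  qed
  have "diag_deviation (transpose U ** A ** U) l0
      \<le> (\<Sum>j\<in>(UNIV::'n set). \<Sum>l\<in>(UNIV::'n set). real CARD('n) * real CARD('n) * norm (A - A0))"
    unfolding diag_deviation_def by (intro sum_mono entry)
  also have "\<dots> = real CARD('n) ^ 4 * norm (A - A0)" by (simp add: power4_eq_xxxx mult.assoc)
  finally show ?thesis .
qed

lemma transpose_conj_diag:
  assumes U: "orthogonal_matrix U" and A0: "A0 = U ** diag_mat l0 ** transpose U"
  shows "transpose U ** A0 ** U = diag_mat l0"
proof -
  have "transpose U ** A0 ** U = (transpose U ** U) ** diag_mat l0 ** (transpose U ** U)"
    by (simp add: A0 matrix_mul_assoc)
  then show ?thesis using U unfolding orthogonal_matrix_def by simp
qed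

lemma spectral_function_error_bound:
  fixes J :: "real^('n::{finite,linorder}) \<Rightarrow> real" and gJ l0 :: "real^('n::{finite,linorder})"
    and U A0 A :: "real^('n::{finite,linorder})^('n::{finite,linorder})"
  defines "\<phi> \<equiv> diag_deviation (transpose U ** A ** U) l0"
  assumes J_sym: "symmetric_fun J" and gJ_ties: "\<And>j k. l0$j = l0$k \<Longrightarrow> gJ$j = gJ$k"
    and U: "orthogonal_matrix U" and A0: "A0 = U ** diag_mat l0 ** transpose U"
    and sym: "transpose A = A" and small: "2 * real CARD('n) * \<phi> < spectral_gap l0"
  obtains l where "norm (l - l0) \<le> real CARD('n) * real CARD('n) * \<phi>" "J (eigvals A) = J l"
    "\<bar>gJ \<bullet> (l - l0) - (U ** diag_mat gJ ** transpose U) \<bullet> (A - A0)\<bar> \<le> perturbation_const l0 gJ * \<phi>\<^sup>2"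
proof -
  have "transpose (transpose U ** A ** U) = transpose U ** A ** U"
    by (simp add: matrix_transpose_mul sym matrix_mul_assoc)
  then obtain Q \<nu> where Q: "orthogonal_matrix Q" and YQ: "transpose U ** A ** U = Q ** diag_mat \<nu> ** transpose Q"
    by (rule symmetric_matrix_orthogonal_diagonalization)
  have "A = (U ** transpose U) ** A ** (U ** transpose U)" using U unfolding orthogonal_matrix_def by simp
  also have "\<dots> = U ** (transpose U ** A ** U) ** transpose U" by (simp add: matrix_mul_assoc)
  also have "\<dots> = (U ** Q) ** diag_mat \<nu> ** transpose (U ** Q)"
    by (simp add: YQ matrix_transpose_mul matrix_mul_assoc)
  finally obtain p' where p': "p' permutes UNIV" "eigvals A = (\<chi> j. \<nu> $ p' j)"
    using eigvals_orthogonal_diagonalization[OF orthogonal_matrix_mul[OF U Q], of \<nu>] by metis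
  obtain p where p: "p permutes UNIV" and near: "\<And>j. \<bar>\<nu>$(p j) - l0$j\<bar> \<le> real CARD('n) * \<phi>"
    and weighted: "\<bar>(\<Sum>j\<in>UNIV. gJ$j * \<nu>$(p j)) - (\<Sum>j\<in>UNIV. gJ$j * (transpose U ** A ** U)$j$j)\<bar>
      \<le> perturbation_const l0 gJ * \<phi>\<^sup>2"
    using eigenvalue_perturbation[OF Q, of \<nu> l0 gJ] small gJ_ties unfolding \<phi>_def YQ by blast
  define l where "l = (\<chi> j. \<nu> $ p j)"
  show ?thesis
  proof (rule that[of l])
    have "norm (l - l0) \<le> (\<Sum>j\<in>UNIV. \<bar>(l - l0) $ j\<bar>)" by (rule norm_le_l1_cart)
    also have "\<dots> \<le> (\<Sum>j\<in>(UNIV::'n set). real CARD('n) * \<phi>)" using near by (intro sum_mono) (simp add: l_def)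
    finally show "norm (l - l0) \<le> real CARD('n) * real CARD('n) * \<phi>" by simp
    show "J (eigvals A) = J l"
      using J_sym p p' unfolding symmetric_fun_def l_def by metis
    have "(U ** diag_mat gJ ** transpose U) \<bullet> (A - A0)
        = (\<Sum>j\<in>UNIV. gJ$j * (transpose U ** A ** U - diag_mat l0)$j$j)"
      unfolding trace_weighted_conj[symmetric]
      by (simp add: transpose_conj_diag[OF U A0, symmetric] matrix_diff_ldistrib matrix_diff_rdistrib)
    moreover have "gJ \<bullet> (l - l0) = (\<Sum>j\<in>UNIV. gJ$j * \<nu>$(p j)) - (\<Sum>j\<in>UNIV. gJ$j * l0$j)"
      unfolding l_def by (simp add: inner_vec_def sum_subtractf algebra_simps)
    ultimately show "\<bar>gJ \<bullet> (l - l0) - (U ** diag_mat gJ ** transpose U) \<bullet> (A - A0)\<bar>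
        \<le> perturbation_const l0 gJ * \<phi>\<^sup>2"
      using weighted by (simp add: diag_mat_def sum_subtractf algebra_simps)
  qed
qed


lemma mult_less_of_less_divide_add_one:
  fixes a x c :: real
  assumes "0 \<le> a" "0 \<le> x" "x < c / (a + 1)"
  shows "a * x < c"
proof -
  have "a * x \<le> (a + 1) * x" using assms(2) by (simp add: algebra_simps)
  also have "\<dots> < c" using assms by (simp add: pos_less_divide_eq mult.commute)
  finally show ?thesis .
qed

lemma has_derivative_within_by_comparison:
  fixes F :: "'a::real_normed_vector \<Rightarrow> real" and J :: "'b::real_normed_vector \<Rightarrow> real"
  assumes L: "bounded_linear L" and J: "(J has_derivative J') (at y0)"
    and \<delta>: "\<delta> > 0" and K: "K \<ge> 0" and C: "C \<ge> 0"
    and near: "\<And>x. x \<in> S \<Longrightarrow> norm (x - x0) < \<delta> \<Longrightarrow> \<exists>y. norm (y - y0) \<le> K * norm (x - x0) \<and>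
      \<bar>F x - F x0 - L (x - x0)\<bar> \<le> \<bar>J y - J y0 - J' (y - y0)\<bar> + C * (norm (x - x0))\<^sup>2"
  shows "(F has_derivative L) (at x0 within S)"
  unfolding has_derivative_within_alt
proof (intro conjI allI impI L)
  fix e :: real assume e: "e > 0"
  then obtain d1 where d1: "d1 > 0" and
    J_lin: "\<And>y. norm (y - y0) < d1 \<Longrightarrow> norm (J y - J y0 - J' (y - y0)) \<le> e / (2 * (K + 1)) * norm (y - y0)"
    using J K unfolding has_derivative_at_alt by (metis add_nonneg_pos divide_pos_pos zero_less_mult_iff
        zero_less_numeral zero_less_one)
  have "min \<delta> (min (d1 / (K + 1)) (e / 2 / (C + 1))) > 0" using \<delta> d1 e K C by simp
  then show "\<exists>d>0. \<forall>x\<in>S. norm (x - x0) < d \<longrightarrow> norm (F x - F x0 - L (x - x0)) \<le> e * norm (x - x0)"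
  proof (intro exI conjI ballI impI)
    fix x assume x: "x \<in> S" and "norm (x - x0) < min \<delta> (min (d1 / (K + 1)) (e / 2 / (C + 1)))"
    then have r: "norm (x - x0) < \<delta>" "norm (x - x0) < d1 / (K + 1)" "norm (x - x0) < e / 2 / (C + 1)"
      by simp_all
    obtain y where y: "norm (y - y0) \<le> K * norm (x - x0)"
      and F: "\<bar>F x - F x0 - L (x - x0)\<bar> \<le> \<bar>J y - J y0 - J' (y - y0)\<bar> + C * (norm (x - x0))\<^sup>2"
      using near[OF x r(1)] by blast
    have "K * norm (x - x0) < d1" using r(2) K by (intro mult_less_of_less_divide_add_one) auto
    then have "\<bar>J y - J y0 - J' (y - y0)\<bar> \<le> e / (2 * (K + 1)) * norm (y - y0)" using J_lin y by simp
    also have "\<dots> \<le> e / (2 * (K + 1)) * ((K + 1) * norm (x - x0))"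
    proof (rule mult_left_mono)
      show "norm (y - y0) \<le> (K + 1) * norm (x - x0)"
        using y norm_ge_zero[of "x - x0"] unfolding distrib_right by linarith
    qed (use e K in simp)
    also have "\<dots> = e * norm (x - x0) / 2" using K by (simp add: field_simps)
    finally have lin: "\<bar>J y - J y0 - J' (y - y0)\<bar> \<le> e * norm (x - x0) / 2" .
    have "C * norm (x - x0) < e / 2" using r(3) C by (intro mult_less_of_less_divide_add_one) auto
    then have "C * norm (x - x0) * norm (x - x0) \<le> e / 2 * norm (x - x0)"
      by (intro mult_right_mono) auto
    then have "C * (norm (x - x0))\<^sup>2 \<le> e * norm (x - x0) / 2" by (simp add: power2_eq_square mult.assoc)
    with F lin show "norm (F x - F x0 - L (x - x0)) \<le> e * norm (x - x0)" by simp
  qed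
qed

theorem spectral_function_has_derivative:
  fixes J :: "real^('n::{finite,linorder}) \<Rightarrow> real" and gJ :: "real^('n::{finite,linorder})"
    and U A0 :: "real^('n::{finite,linorder})^('n::{finite,linorder})"
  assumes J_sym: "symmetric_fun J" and J_grad: "(J has_derivative (\<lambda>h. gJ \<bullet> h)) (at (eigvals A0))"
    and U: "orthogonal_matrix U" and A0: "A0 = U ** diag_mat (eigvals A0) ** transpose U"
  shows "((\<lambda>A. J (eigvals A)) has_derivative (\<lambda>H. (U ** diag_mat gJ ** transpose U) \<bullet> H))
    (at A0 within {A. transpose A = A})"
proof -
  define l0 where "l0 = eigvals A0"
  define N where "N = real CARD('n)"
  have N: "N \<ge> 1" by (simp add: N_def Suc_leI)
  have ties: "\<And>j k. l0$j = l0$k \<Longrightarrow> gJ$j = gJ$k"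
    using symmetric_fun_gradient_eq[OF J_sym J_grad] unfolding l0_def .
  note A0' = A0[folded l0_def]
  show ?thesis
  proof (rule has_derivative_within_by_comparison[OF bounded_linear_inner_right J_grad[folded l0_def]])
    show "spectral_gap l0 / (2 * N ^ 5) > 0" "N ^ 6 \<ge> 0" "perturbation_const l0 gJ * N ^ 8 \<ge> 0"
      using N spectral_gap_pos[of l0] perturbation_const_nonneg[of l0 gJ] by simp_all
    fix A assume "A \<in> {A. transpose A = A}" and r: "norm (A - A0) < spectral_gap l0 / (2 * N ^ 5)"
    then have sym: "transpose A = A" by simp
    define \<phi> where "\<phi> = diag_deviation (transpose U ** A ** U) l0"
    have \<phi>: "0 \<le> \<phi>" "\<phi> \<le> N ^ 4 * norm (A - A0)"
      using diag_deviation_orthogonal_conj_le[OF U transpose_conj_diag[OF U A0'], of A]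
      by (simp_all add: \<phi>_def N_def diag_deviation_nonneg)
    have "2 * N * \<phi> \<le> 2 * N ^ 5 * norm (A - A0)" using \<phi> N by (simp add: power_eq_if)
    also have "\<dots> < spectral_gap l0" using r N by (simp add: pos_less_divide_eq mult.commute)
    finally obtain l where l: "norm (l - l0) \<le> N * N * \<phi>" and Jl: "J (eigvals A) = J l"
      and quad: "\<bar>gJ \<bullet> (l - l0) - (U ** diag_mat gJ ** transpose U) \<bullet> (A - A0)\<bar>
        \<le> perturbation_const l0 gJ * \<phi>\<^sup>2"
      using spectral_function_error_bound[OF J_sym ties U A0' sym] unfolding \<phi>_def N_def by blast
    have "N * N * \<phi> \<le> N ^ 6 * norm (A - A0)" using \<phi> N by (simp add: power_eq_if)
    moreover have "\<phi>\<^sup>2 \<le> (N ^ 4 * norm (A - A0))\<^sup>2" using \<phi> by (intro power_mono) auto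
    then have "perturbation_const l0 gJ * \<phi>\<^sup>2 \<le> perturbation_const l0 gJ * N ^ 8 * (norm (A - A0))\<^sup>2"
      using perturbation_const_nonneg[of l0 gJ]
      by (simp add: power_mult_distrib mult.assoc mult_left_mono flip: power_mult)
    ultimately show "\<exists>l. norm (l - l0) \<le> N ^ 6 * norm (A - A0) \<and>
        \<bar>J (eigvals A) - J (eigvals A0) - (U ** diag_mat gJ ** transpose U) \<bullet> (A - A0)\<bar>
        \<le> \<bar>J l - J l0 - gJ \<bullet> (l - l0)\<bar> + perturbation_const l0 gJ * N ^ 8 * (norm (A - A0))\<^sup>2"
      using l quad unfolding Jl l0_def[symmetric] by (intro exI[of _ l]) auto
  qed
qed

section \<open>The matrix of pairwise interactions\<close>

lemma has_derivative_matrix_entrywise: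
  fixes F :: "'a::real_normed_vector \<Rightarrow> real^'n^'m"
  assumes "\<And>a b. ((\<lambda>y. F y $ a $ b) has_derivative (\<lambda>h. F' h $ a $ b)) (at x within S)"
  shows "(F has_derivative F') (at x within S)"
proof (rule has_derivative_componentwise_within[THEN iffD2, rule_format])
  fix u :: "real^'n^'m" assume "u \<in> Basis"
  then obtain a b where "u = axis a (axis b 1)" by (auto simp: Basis_vec_def)
  then show "((\<lambda>y. F y \<bullet> u) has_derivative (\<lambda>h. F' h \<bullet> u)) (at x within S)"
    using assms[of a b] by (simp add: inner_axis)
qed
lemma has_derivative_comp_norm_sq:
  fixes p q :: "'a::real_inner"
  assumes "f differentiable (at ((norm (q - p))\<^sup>2))"
  shows "((\<lambda>y. f ((norm (y - p))\<^sup>2)) has_derivative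
    (\<lambda>h. 2 * deriv f ((norm (q - p))\<^sup>2) * ((q - p) \<bullet> h))) (at q)"
proof -
  have "((\<lambda>y. (y - p) \<bullet> (y - p)) has_derivative (\<lambda>h. (q - p) \<bullet> h + h \<bullet> (q - p))) (at q)"
    by (auto intro!: derivative_eq_intros)
  then have inner: "((\<lambda>y. (norm (y - p))\<^sup>2) has_derivative (\<lambda>h. 2 * ((q - p) \<bullet> h))) (at q)"
    by (simp add: power2_norm_eq_inner inner_commute)
  have "(f has_derivative (\<lambda>t. deriv f ((norm (q - p))\<^sup>2) * t)) (at ((norm (q - p))\<^sup>2))"
    using assms DERIV_deriv_iff_real_differentiable has_field_derivative_imp_has_derivative by blast
  from has_derivative_compose[OF inner this] show ?thesis by (simp add: mult_ac)
qed
lemma Wmat_symmetric: "transpose (Wmat f z) = Wmat f z"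
  unfolding Wmat_def transpose_def by (simp add: vec_eq_iff norm_minus_commute)

definition Wmat_update_deriv :: "(real \<Rightarrow> real) \<Rightarrow> real^'d^'n \<Rightarrow> 'n \<Rightarrow> real^'d \<Rightarrow> real^'n^'n" where
  "Wmat_update_deriv f x i h = (\<chi> a b.
     if a = b then 0
     else if a = i then 2 * deriv f ((norm (x$i - x$b))\<^sup>2) * ((x$i - x$b) \<bullet> h)
     else if b = i then 2 * deriv f ((norm (x$i - x$a))\<^sup>2) * ((x$i - x$a) \<bullet> h)
     else 0)"

lemma Wmat_update_has_derivative:
  fixes x :: "real^'d^'n"
  assumes distinct: "\<And>j k. j \<noteq> k \<Longrightarrow> x $ j \<noteq> x $ k" and f_diff: "\<And>t. t > 0 \<Longrightarrow> f differentiable (at t)"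
  shows "((\<lambda>y. Wmat f (\<chi> j. if j = i then y else x $ j)) has_derivative Wmat_update_deriv f x i) (at (x$i))"
proof (rule has_derivative_matrix_entrywise)
  fix a b
  have d: "((\<lambda>y. f ((norm (y - x$k))\<^sup>2)) has_derivative
      (\<lambda>h. 2 * deriv f ((norm (x$i - x$k))\<^sup>2) * ((x$i - x$k) \<bullet> h))) (at (x$i))" if "k \<noteq> i" for k
    using distinct[OF that] f_diff by (intro has_derivative_comp_norm_sq) auto
  let ?W = "\<lambda>y. Wmat f (\<chi> j. if j = i then y else x $ j) $ a $ b"
  consider "a = b" | "a \<noteq> b" "a = i" | "a \<noteq> b" "b = i" | "a \<noteq> b" "a \<noteq> i" "b \<noteq> i" by blast
  then show "(?W has_derivative (\<lambda>h. Wmat_update_deriv f x i h $ a $ b)) (at (x$i))"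
  proof cases
    case 2
    then have "?W = (\<lambda>y. f ((norm (y - x$b))\<^sup>2))" by (auto simp: Wmat_def)
    with 2 d[of b] show ?thesis by (simp add: Wmat_update_deriv_def)
  next
    case 3
    then have "?W = (\<lambda>y. f ((norm (y - x$a))\<^sup>2))" by (auto simp: Wmat_def norm_minus_commute)
    with 3 d[of a] show ?thesis by (simp add: Wmat_update_deriv_def)
  qed (auto simp: Wmat_def Wmat_update_deriv_def)
qed

lemma inner_Wmat_update_deriv:
  fixes M :: "real^'n^'n"
  assumes sym: "\<And>a b. M$a$b = M$b$a"
  shows "M \<bullet> Wmat_update_deriv f x i h
    = 4 * (\<Sum>k\<in>UNIV - {i}. M$i$k * deriv f ((norm (x$i - x$k))\<^sup>2) * ((x$i - x$k) \<bullet> h))"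
proof -
  define c where "c k = (if k = i then 0 else 2 * deriv f ((norm (x$i - x$k))\<^sup>2) * ((x$i - x$k) \<bullet> h))" for k
  have "Wmat_update_deriv f x i h $ a $ b = (if a = i then c b else 0) + (if b = i then c a else 0)" for a b
    by (auto simp: Wmat_update_deriv_def c_def)
  moreover have dbl: "(\<Sum>a\<in>UNIV. \<Sum>b\<in>UNIV. if a = i then g b else 0) = (\<Sum>b\<in>UNIV. g b)"
    for g :: "'n \<Rightarrow> real"
    by (subst sum.swap) (simp add: sum.delta)
  ultimately have "M \<bullet> Wmat_update_deriv f x i h = (\<Sum>b\<in>UNIV. M$i$b * c b) + (\<Sum>a\<in>UNIV. M$a$i * c a)"
    by (simp add: inner_vec_def distrib_left sum.distrib if_distrib[of "\<lambda>t. _ * t"] sum.delta'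
        cong: if_cong)
  also have "\<dots> = 2 * (\<Sum>k\<in>UNIV. M$i$k * c k)" using sym by simp
  also have "(\<Sum>k\<in>UNIV. M$i$k * c k) = (\<Sum>k\<in>UNIV - {i}. M$i$k * c k)"
    by (simp add: sum.remove[of UNIV i] c_def)
  also have "\<dots> = 2 * (\<Sum>k\<in>UNIV - {i}. M$i$k * deriv f ((norm (x$i - x$k))\<^sup>2) * ((x$i - x$k) \<bullet> h))"
    unfolding sum_distrib_left by (intro sum.cong refl) (simp add: c_def)
  finally show ?thesis by simp
qed

theorem propositionA1:
  fixes x :: "real ^ ('d :: finite) ^ ('n :: {finite, linorder})"
    and f :: "real \<Rightarrow> real"
    and J :: "real ^ ('n :: {finite, linorder}) \<Rightarrow> real"
    and gJ :: "real ^ ('n :: {finite, linorder})"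
    and U :: "real ^ ('n :: {finite, linorder}) ^ ('n :: {finite, linorder})"
    and i :: 'n
  assumes distinct: "\<And>j k. j \<noteq> k \<Longrightarrow> x $ j \<noteq> x $ k"
    and f_diff: "\<And>t. t > 0 \<Longrightarrow> f differentiable (at t)"
    and J_sym: "symmetric_fun J"
    and J_grad: "(J has_derivative (\<lambda>h. gJ \<bullet> h)) (at (eigvals (Wmat f x)))"
    and U_orth: "orthogonal_matrix U"
    and U_dec: "Wmat f x = U ** diag_mat (eigvals (Wmat f x)) ** transpose U"
  shows "((\<lambda>y. J (eigvals (Wmat f (\<chi> j. if j = i then y else x $ j))))
           has_derivative
          (\<lambda>h. (4 *\<^sub>R (\<Sum>k\<in>UNIV - {i}.
                 ((U ** diag_mat gJ ** transpose U) $ i $ k * deriv f ((norm (x $ i - x $ k))\<^sup>2))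
                   *\<^sub>R (x $ i - x $ k))) \<bullet> h)) (at (x $ i))"
proof -
  let ?W = "\<lambda>y. Wmat f (\<chi> j. if j = i then y else x $ j)"
  let ?M = "U ** diag_mat gJ ** transpose U"
  have "(\<chi> j. if j = i then x $ i else x $ j) = x" by (simp add: vec_eq_iff)
  then have "?W (x $ i) = Wmat f x" by simp
  then have "((\<lambda>A. J (eigvals A)) has_derivative (\<lambda>H. ?M \<bullet> H)) (at (?W (x $ i)) within range ?W)"
    using spectral_function_has_derivative[OF J_sym J_grad U_orth U_dec]
    by (auto intro: has_derivative_subset simp: Wmat_symmetric)
  with Wmat_update_has_derivative[OF distinct f_diff]
  have "((\<lambda>y. J (eigvals (?W y))) has_derivative (\<lambda>h. ?M \<bullet> Wmat_update_deriv f x i h)) (at (x $ i))"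
    by (rule has_derivative_in_compose)
  moreover have "?M$a$b = ?M$b$a" for a b by (simp add: conj_diag_mat_entry mult_ac)
  ultimately show ?thesis
    by (simp add: inner_Wmat_update_deriv inner_sum_left sum_distrib_left mult_ac)
qed

end
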